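(* Consider Janus Quicksort (JQuick), as described in the context, run on $n$ elements with distinct keys distributed over $p$ processes with $n/p$ elements each. With probability $1-O(p^{-6})$, JQuick executes only $O(\log p)$ distributed levels of recursion (equivalently, it executes more than $O(\log p)$ distributed levels of recursion with probability $O(p^{-6})$).
   Context: Janus Quicksort (JQuick) is a recursive distributed-memory sorting algorithm. The input is $n$ elements with pairwise distinct keys, distributed over $p$ processes numbered $0,\dots,p-1$ with exactly $n/p$ elements per process ($n$ a multiple of $p$). The algorithm maintains tasks; a task is a contiguous range of processes together with a contiguous range of the global sorted order of elements that these processes jointly hold, every process holding exactly $n/p$ elements in total, summed over all tasks it belongs to. A process may belong to two tasks at once (a "janus process"), and it then processes both simultaneously. One distributed level of recursion on a task performs four steps: (1) pivot selection: an element of the task chosen uniformly at random is broadcast to all processes of the task; (2) partitioning: each process splits its elements of the task into small elements (smaller than the pivot) and large elements (at least the pivot); (3) data assignment: using prefix sums and broadcasts, the small elements are assigned to a left group consisting of an initial segment of the task's processes and the large elements to a right group consisting of a final segment, such that every process again holds exactly $n/p$ elements in total; the two groups share at most one process (a janus process); (4) data exchange: elements are sent to their assigned processes. Then the left group recursively sorts the small elements and the right group the large elements. A task covering only one or two processes is a base case; base cases are not split further but sorted in a second phase. The number of distributed levels of recursion is the depth of this recursion (excluding the base-case phase). *)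

theory Defs
  imports "HOL-Probability.Probability_Mass_Function"
begin

text \<open>Distinct keys are identified with their global ranks
  0..n-1. Global sorted position (slot) k belongs to process k div m, where m = n/p is
  the number of elements per process. A task is the contiguous rank range [a,b); it is
  held by the processes owning slots a..b-1 (consecutive, the border ones possibly janus
  processes). The number of processes of a nonempty task [a,b) is
  (b-1) div m - a div m + 1.\<close>

definition jq_nprocs :: "nat \<Rightarrow> nat \<Rightarrow> nat \<Rightarrow> nat" where
  "jq_nprocs m a b = (if b \<le> a then 0 else (b - 1) div m - a div m + 1)"

definition jq_base :: "nat \<Rightarrow> nat \<Rightarrow> nat \<Rightarrow> bool" where
  "jq_base m a b \<longleftrightarrow> jq_nprocs m a b \<le> 2"

text \<open>jq_exceeds d m a b: distribution of the event that the recursion started on task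
  [a,b) executes more than d distributed levels. One level on a non-base task: the pivot
  rank r is uniform in [a,b); the small elements [a,r) go to the left group (no task if
  empty), the large elements [r,b) to the right group; both subtasks recurse with
  independent randomness.\<close>
primrec jq_exceeds :: "nat \<Rightarrow> nat \<Rightarrow> nat \<Rightarrow> nat \<Rightarrow> bool pmf" where
  "jq_exceeds 0 m a b = return_pmf (\<not> jq_base m a b)"
| "jq_exceeds (Suc d) m a b =
     (if jq_base m a b then return_pmf False
      else bind_pmf (pmf_of_set {a..<b}) (\<lambda>r.
             bind_pmf (if a < r then jq_exceeds d m a r else return_pmf False) (\<lambda>x.
             bind_pmf (jq_exceeds d m r b) (\<lambda>y. return_pmf (x \<or> y)))))"

definition jq_depth_exceeds_prob :: "nat \<Rightarrow> nat \<Rightarrow> nat \<Rightarrow> real" where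
  "jq_depth_exceeds_prob n p d = measure_pmf.prob (jq_exceeds d (n div p) 0 n) {True}"

end

theory Submission
  imports Defs
begin

text \<open>A task [a,b) carries the potential ((b - a)/m)^2, which is at least 1 if the task is not
  a base case. A uniformly random pivot splits a task of size s into two tasks whose squared sizes
  sum to (2s^2 + 1)/3 \<le> 3s^2/4 in expectation (for s \<ge> 2), so the expected total potential of
  the tasks alive after d levels is at most (3/4)^d times the initial potential p^2. By the union
  bound this dominates the probability that some task is still split at depth d, which is below
  p^(-6) once d \<ge> 32 ln p.\<close>

lemma jq_nonbase_size:
  assumes "m \<ge> 1" and "\<not> jq_base m a b"
  shows "a < b" and "m < b - a"
proof -
  show ab: "a < b"
    using assms unfolding jq_base_def jq_nprocs_def by (auto split: if_splits)
  have "a div m + 2 \<le> (b - 1) div m"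
    using assms ab unfolding jq_base_def jq_nprocs_def by auto
  then have "m * (a div m) + 2 * m \<le> m * ((b - 1) div m)"
    by (metis add_mult_distrib2 mult.commute mult_le_mono2)
  moreover have "m * ((b - 1) div m) \<le> b - 1"
    by simp
  moreover have "a < m * (a div m) + m"
    using assms(1) by (metis add_less_cancel_left div_mult_mod_eq less_le_trans mod_less_divisor
        mult.commute zero_less_one)
  ultimately show "m < b - a"
    by linarith
qed

lemma pmf_bind_disj_True_le:
  fixes A B :: "bool pmf"
  shows "pmf (A \<bind> (\<lambda>x. B \<bind> (\<lambda>y. return_pmf (x \<or> y)))) True \<le> pmf A True + pmf B True"
proof -
  have "pmf (A \<bind> (\<lambda>x. B \<bind> (\<lambda>y. return_pmf (x \<or> y)))) True
      = (\<Sum>x\<in>UNIV. pmf (B \<bind> (\<lambda>y. return_pmf (x \<or> y))) True * pmf A x)"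
    unfolding pmf_bind by (rule integral_measure_pmf_real) auto
  also have "\<dots> = pmf A True + pmf B True * pmf A False"
    by (simp add: UNIV_bool bind_return_pmf')
  also have "\<dots> \<le> pmf A True + pmf B True"
    using pmf_le_1[of A False] pmf_nonneg[of B True] by (simp add: mult_left_le)
  finally show ?thesis .
qed

lemma sum_consecutive_squares:
  "(\<Sum>i<s. real i ^ 2 + real (Suc i) ^ 2) = (2 * real s ^ 3 + real s) / 3"
  by (induction s) (simp_all add: power2_eq_square power3_eq_cube field_simps)

lemma sum_split_squares:
  assumes "a \<le> b"
  shows "(\<Sum>r\<in>{a..<b}. real (r - a) ^ 2 + real (b - r) ^ 2) = (2 * real (b - a) ^ 3 + real (b - a)) / 3"
proof -
  define s where "s = b - a"
  have b: "b = s + a"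
    using assms s_def by simp
  have "(\<Sum>r\<in>{a..<b}. real (r - a) ^ 2 + real (b - r) ^ 2) = (\<Sum>i<s. real i ^ 2 + real (s - i) ^ 2)"
    unfolding b atLeast0LessThan[symmetric]
    using sum.shift_bounds_nat_ivl[of "\<lambda>r. real (r - a) ^ 2 + real (s + a - r) ^ 2" 0 a s]
    by simp
  also have "\<dots> = (\<Sum>i<s. real i ^ 2) + (\<Sum>i<s. real (Suc (s - Suc i)) ^ 2)"
    by (simp add: sum.distrib Suc_diff_Suc)
  also have "(\<Sum>i<s. real (Suc (s - Suc i)) ^ 2) = (\<Sum>i<s. real (Suc i) ^ 2)"
    using sum.nat_diff_reindex[of "\<lambda>i. real (Suc i) ^ 2" s] by simp
  finally show ?thesis
    using sum_consecutive_squares[of s] by (simp add: sum.distrib s_def)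
qed

lemma mean_split_squares_le:
  assumes "a + 2 \<le> b"
  shows "(\<Sum>r\<in>{a..<b}. real (r - a) ^ 2 + real (b - r) ^ 2) / real (b - a) \<le> 3/4 * real (b - a) ^ 2"
proof -
  define S where "S = (\<Sum>r\<in>{a..<b}. real (r - a) ^ 2 + real (b - r) ^ 2)"
  define s where "s = real (b - a)"
  have S: "S = (2 * s ^ 3 + s) / 3"
    unfolding S_def s_def using assms by (intro sum_split_squares) simp
  have s2: "2 \<le> s"
    using assms s_def by simp
  then have "2 * 2 \<le> s * s"
    by (intro mult_mono) auto
  then have "4 * s \<le> s * s * s"
    using s2 by (intro mult_right_mono) auto
  then have "S \<le> 3/4 * s ^ 2 * s"
    unfolding S by (simp add: power3_eq_cube power2_eq_square)
  then have "S / s \<le> 3/4 * s ^ 2"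
    using s2 by (simp add: pos_divide_le_eq)
  then show ?thesis
    unfolding S_def s_def .
qed

lemma jq_exceeds_True_le:
  assumes m: "m \<ge> 1"
  shows "pmf (jq_exceeds d m a b) True \<le> real (b - a) ^ 2 / real m ^ 2 * (3/4) ^ d"
proof (induction d arbitrary: a b)
  case 0
  show ?case
  proof (cases "jq_base m a b")
    case False
    then have "real m ^ 2 \<le> real (b - a) ^ 2"
      using jq_nonbase_size[OF m] by (intro power_mono of_nat_mono) (auto simp: less_imp_le)
    with False m show ?thesis
      by simp
  qed simp
next
  case (Suc d)
  show ?case
  proof (cases "jq_base m a b")
    case False
    have ab: "a < b" and "m < b - a"
      using jq_nonbase_size[OF m False] by auto
    then have a2b: "a + 2 \<le> b"
      using m by linarith
    define q :: real where "q = (3/4) ^ d / real m ^ 2"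
    define left where "left r = (if a < r then jq_exceeds d m a r else return_pmf False)" for r
    have split_le: "pmf (left r \<bind> (\<lambda>x. jq_exceeds d m r b \<bind> (\<lambda>y. return_pmf (x \<or> y)))) True
        \<le> (real (r - a) ^ 2 + real (b - r) ^ 2) * q" for r
    proof -
      have "pmf (left r) True \<le> real (r - a) ^ 2 * q"
        using Suc.IH[of a r] by (auto simp: left_def q_def)
      moreover have "pmf (jq_exceeds d m r b) True \<le> real (b - r) ^ 2 * q"
        using Suc.IH[of r b] by (simp add: q_def)
      ultimately show ?thesis
        using pmf_bind_disj_True_le[of "left r" "jq_exceeds d m r b"] by (simp add: distrib_right)
    qed
    have "pmf (jq_exceeds (Suc d) m a b) True
        = (\<Sum>r\<in>{a..<b}. pmf (left r \<bind> (\<lambda>x. jq_exceeds d m r b \<bind> (\<lambda>y. return_pmf (x \<or> y)))) True)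
          / real (b - a)"
      using False ab by (simp add: left_def pmf_bind_pmf_of_set)
    also have "\<dots> \<le> (\<Sum>r\<in>{a..<b}. (real (r - a) ^ 2 + real (b - r) ^ 2) * q) / real (b - a)"
      by (intro divide_right_mono sum_mono split_le) simp
    also have "\<dots> = (\<Sum>r\<in>{a..<b}. real (r - a) ^ 2 + real (b - r) ^ 2) / real (b - a) * q"
      by (simp add: sum_distrib_right)
    also have "\<dots> \<le> 3/4 * real (b - a) ^ 2 * q"
      by (rule mult_right_mono[OF mean_split_squares_le[OF a2b]]) (simp add: q_def)
    also have "\<dots> = real (b - a) ^ 2 / real m ^ 2 * (3/4) ^ Suc d"
      by (simp add: q_def)
    finally show ?thesis .
  qed simp
qed

lemma three_quarters_pow_le_powr:
  assumes "1 \<le> x" and "32 * ln x \<le> real d"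
  shows "(3/4::real) ^ d \<le> x powr (-8)"
proof -
  have "ln (3/4::real) \<le> -1/4"
    using ln_le_minus_one[of "3/4::real"] by simp
  then have "real d * ln (3/4) \<le> -8 * ln x"
    using assms mult_left_mono[of "ln (3/4)" "-1/4" "real d"] by simp
  then have "exp (real d * ln (3/4)) \<le> exp (-8 * ln x)"
    by simp
  then show ?thesis
    using assms(1) by (simp add: powr_def exp_of_nat_mult)
qed

theorem lemma2:
  "\<exists>C::real. C > 0 \<and> (\<exists>K::real. \<forall>p n::nat. 1 \<le> p \<and> 0 < n \<and> p dvd n \<longrightarrow>
      jq_depth_exceeds_prob n p (nat \<lceil>C * ln (real p)\<rceil>) \<le> K * real p powr (-6))"
proof (intro exI conjI allI impI)
  show "(32::real) > 0"
    by simp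
  fix p n :: nat
  assume h: "1 \<le> p \<and> 0 < n \<and> p dvd n"
  define m where "m = n div p"
  define d where "d = nat \<lceil>32 * ln (real p)\<rceil>"
  have n: "n = p * m" and m: "m \<ge> 1"
    using h by (auto simp: m_def elim!: dvdE)
  have "jq_depth_exceeds_prob n p d = pmf (jq_exceeds d m 0 n) True"
    unfolding jq_depth_exceeds_prob_def m_def by (simp add: measure_pmf_single)
  also have "\<dots> \<le> real p ^ 2 * (3/4) ^ d"
    using jq_exceeds_True_le[OF m, of d 0 n] m by (simp add: n power_mult_distrib)
  also have "\<dots> \<le> real p powr 2 * real p powr (-8)"
    using h three_quarters_pow_le_powr[of "real p" d] by (simp add: d_def powr_realpow)
  also have "\<dots> = 1 * real p powr (-6)"
    using h by (subst powr_add[symmetric]) simp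
  finally show "jq_depth_exceeds_prob n p (nat \<lceil>32 * ln (real p)\<rceil>) \<le> 1 * real p powr (-6)"
    unfolding d_def .
qed

end
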